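(* Let $k>0$, let $0<c<p$, let $T\ge 1$ be an integer, let $b_1>0$ and $a_1>\max(1,1/k)$, and let the demand-shape function be $\ell(y)=y^{k}$. Assume the set of feasible wholesale prices is $W=[\underline{w},\overline{w}]$ with $0<\underline{w}\le c<p\le\overline{w}$. Then: (a) There exists a standardized Markov perfect solution (SMPS). (b) There exists a Markov perfect equilibrium (MPE) of the dynamic wholesale-price game. (c) If $(w^*_t,\tilde z^*_t)_{1\le t\le T}$ is any SMPS with standardized value functions $(f^R_t,\hat f^R_t,f^M_t)_{1\le t\le T+1}$, and one defines, for $a\in A$, $b\in B$, $w\in W$, $$\tilde w_t(a,b):=w^*_t(a),\qquad \tilde q_t(a,b,w):=b^{1/k}\,\tilde z^*_t(a,w),$$ then $(\tilde w_t,\tilde q_t)_{1\le t\le T}$ is an MPE of the game, with value functions $$V^R_t(a,b)=\frac{b^{1/k}}{a-1}f^R_t(a),\qquad \hat V^R_t(a,b,w)=\frac{b^{1/k}}{a-1}\hat f^R_t(a,w),\qquad V^M_t(a,b)=\frac{b^{1/k}}{a-1}f^M_t(a).$$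
   Context: Setting. A manufacturer M and a retailer R interact over periods $t=1,\dots,T$. Retail price $p$ and unit production cost $c$ are fixed with $0<c<p$. The feasible wholesale prices form a set $W\subset(0,\infty)$ with $[c,p]\subset W$; feasible order quantities are $Q=[0,\infty)$. An unknown parameter $\Theta>0$ has Gamma prior density $\phi(\theta\mid a,b)=b^{a}\theta^{a-1}e^{-b\theta}/\Gamma(a)$; given $\Theta=\theta$ the demands $D_1,\dots,D_T$ are i.i.d. with $P(D_t\le y\mid\theta)=1-e^{-\theta\ell(y)}$, here $\ell(y)=y^k$. The predictive distribution function with hyperparameters $(a,b)$ is $G(y\mid a,b)=1-\big(b/(b+\ell(y))\big)^{a}$, $y\ge0$, and $\bar G=1-G$; $E[\,\cdot\mid a,b]$ denotes expectation with respect to $D\sim G(\cdot\mid a,b)$. Let $A=\{a_1+n:n=0,1,2,\dots\}$ and $B=[b_1,\infty)$. In each period the manufacturer chooses $w\in W$, the retailer observes it and orders $q\in Q$, sales $s=\min(D,q)$ are publicly observed (unmet demand is lost and unobserved), and the public belief state $(a,b)$ moves to $\Phi(a,b,q,d)=(a+\mathbf 1\{\min(d,q)<q\},\ b+\ell(\min(d,q)))$. Per-period payoffs: retailer $\Pi^R(w,q\mid a,b)=p\,E[\min(D,q)\mid a,b]-wq$; manufacturer $\Pi^M(w,q)=(w-c)q$. Markov strategies: for the manufacturer, Borel maps $w_t:A\times B\to W$; for the retailer, Borel maps $q_t:A\times B\times W\to Q$, $t=1,\dots,T$. A pair $(w^*_t,q^*_t)_{t\le T}$ is an MPE if there are functions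 $V^R_t,V^M_t:A\times B\to\mathbb R$, $\hat V^R_t:A\times B\times W\to\mathbb R$ ($t=1,\dots,T+1$) such that for all $a\in A,b\in B,w\in W$: (i) $V^R_{T+1}=\hat V^R_{T+1}=V^M_{T+1}=0$; (ii) for each $t\le T$, $\hat V^R_t(a,b,w)=\max_{q\in Q}\{\Pi^R(w,q\mid a,b)+E[V^R_{t+1}(\Phi(a,b,q,D))\mid a,b]\}$ and $q^*_t(a,b,w)$ attains this maximum; (iii) for each $t\le T$, $V^M_t(a,b)=\max_{w\in W}\{\Pi^M(w,q^*_t(a,b,w))+E[V^M_{t+1}(\Phi(a,b,q^*_t(a,b,w),D))\mid a,b]\}$ and $w^*_t(a,b)$ attains this maximum; (iv) $V^R_t(a,b)=\hat V^R_t(a,b,w^*_t(a,b))$. Standardized problem. Let $\tilde Q=[0,\infty)$. Standardized per-period payoffs: $\tilde\Pi^R(w,\tilde z\mid a)=(a-1)\big(p\,E[\min(D,\tilde z)\mid a,1]-w\tilde z\big)$ and $\tilde\Pi^M(w,\tilde z\mid a)=(a-1)(w-c)\tilde z$. For $f:A\to\mathbb R$, define $\mathcal E[f,\tilde z\mid a]=\frac{a-1}{a-1/k}G(\tilde z\mid a-1/k,1)f(a+1)+\bar G(\tilde z\mid a-1/k,1)f(a)$. Standardized Markov strategies are maps $w_t:A\to W$ and $\tilde z_t:A\times W\to\tilde Q$. A pair $(w^*_t,\tilde z^*_t)_{t\le T}$ is an SMPS if there are functions $f^R_t,f^M_t:A\to\mathbb R$, $\hat f^R_t:A\times W\to\mathbb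 R$ ($t=1,\dots,T+1$) such that for all $a\in A,w\in W$: (i) $f^R_{T+1}=\hat f^R_{T+1}=f^M_{T+1}=0$; (ii) $\hat f^R_t(a,w)=\max_{\tilde z\in\tilde Q}\{\tilde\Pi^R(w,\tilde z\mid a)+\mathcal E[f^R_{t+1},\tilde z\mid a]\}$ with $\tilde z^*_t(a,w)$ a maximizer; (iii) $f^M_t(a)=\max_{w\in W}\{\tilde\Pi^M(w,\tilde z^*_t(a,w)\mid a)+\mathcal E[f^M_{t+1},\tilde z^*_t(a,w)\mid a]\}$ with $w^*_t(a)$ a maximizer; (iv) $f^R_t(a)=\hat f^R_t(a,w^*_t(a))$. *)

theory Defs
  imports "HOL-Analysis.Analysis"
begin

definition Aset :: "real \<Rightarrow> real set" where
  "Aset a1 = {a1 + real n | n. True}"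

definition Bset :: "real \<Rightarrow> real set" where
  "Bset b1 = {b1..}"

definition ell :: "real \<Rightarrow> real \<Rightarrow> real" where
  "ell k y = y powr k"

definition predG :: "real \<Rightarrow> real \<Rightarrow> real \<Rightarrow> real \<Rightarrow> real" where
  "predG k a b y = (if y < 0 then 0 else 1 - (b / (b + ell k y)) powr a)"

text \<open>The law of D ~ G(. | a,b), as the Lebesgue-Stieltjes measure of G.\<close>
definition pred_dist :: "real \<Rightarrow> real \<Rightarrow> real \<Rightarrow> real measure" where
  "pred_dist k a b = interval_measure (predG k a b)"

definition Ex :: "real \<Rightarrow> real \<Rightarrow> real \<Rightarrow> (real \<Rightarrow> real) \<Rightarrow> real" where
  "Ex k a b f = (\<integral>d. f d \<partial>pred_dist k a b)"

definition Phi :: "real \<Rightarrow> real \<Rightarrow> real \<Rightarrow> real \<Rightarrow> real \<Rightarrow> real \<times> real" where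
  "Phi k a b q d = (a + (if min d q < q then 1 else 0), b + ell k (min d q))"

definition PiR :: "real \<Rightarrow> real \<Rightarrow> real \<Rightarrow> real \<Rightarrow> real \<Rightarrow> real \<Rightarrow> real" where
  "PiR p k w q a b = p * Ex k a b (\<lambda>d. min d q) - w * q"

definition PiM :: "real \<Rightarrow> real \<Rightarrow> real \<Rightarrow> real" where
  "PiM c w q = (w - c) * q"

definition Cont :: "real \<Rightarrow> (real \<Rightarrow> real \<Rightarrow> real) \<Rightarrow> real \<Rightarrow> real \<Rightarrow> real \<Rightarrow> real" where
  "Cont k V a b q = Ex k a b (\<lambda>d. case_prod V (Phi k a b q d))"

definition ContInt :: "real \<Rightarrow> (real \<Rightarrow> real \<Rightarrow> real) \<Rightarrow> real \<Rightarrow> real \<Rightarrow> real \<Rightarrow> bool" where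
  "ContInt k V a b q = integrable (pred_dist k a b) (\<lambda>d. case_prod V (Phi k a b q d))"

text \<open>Markov strategies (Borel maps) for periods 1..T.
  wS t a b is the wholesale price, qS t a b w the order quantity.\<close>
definition markov_strategies ::
  "real \<Rightarrow> real \<Rightarrow> real set \<Rightarrow> nat \<Rightarrow> (nat \<Rightarrow> real \<Rightarrow> real \<Rightarrow> real)
     \<Rightarrow> (nat \<Rightarrow> real \<Rightarrow> real \<Rightarrow> real \<Rightarrow> real) \<Rightarrow> bool" where
  "markov_strategies a1 b1 W T wS qS \<longleftrightarrow>
     (\<forall>t\<in>{1..T}. \<forall>a\<in>Aset a1.
        (\<forall>b\<in>Bset b1. wS t a b \<in> W) \<and>
        (\<forall>b\<in>Bset b1. \<forall>w\<in>W. qS t a b w \<ge> 0) \<and>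
        (\<lambda>b. wS t a b) \<in> borel_measurable (restrict_space borel (Bset b1)) \<and>
        (\<lambda>(b, w). qS t a b w) \<in> borel_measurable (restrict_space borel (Bset b1 \<times> W)))"

text \<open>MPE with given value functions (conditions (i)-(iv)); the expectations are
  required to exist (integrability).\<close>
definition MPE_with ::
  "real \<Rightarrow> real \<Rightarrow> real \<Rightarrow> real \<Rightarrow> real \<Rightarrow> real set \<Rightarrow> nat
   \<Rightarrow> (nat \<Rightarrow> real \<Rightarrow> real \<Rightarrow> real) \<Rightarrow> (nat \<Rightarrow> real \<Rightarrow> real \<Rightarrow> real \<Rightarrow> real)
   \<Rightarrow> (nat \<Rightarrow> real \<Rightarrow> real \<Rightarrow> real) \<Rightarrow> (nat \<Rightarrow> real \<Rightarrow> real \<Rightarrow> real \<Rightarrow> real)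
   \<Rightarrow> (nat \<Rightarrow> real \<Rightarrow> real \<Rightarrow> real) \<Rightarrow> bool" where
  "MPE_with p c k a1 b1 W T wS qS VR VRh VM \<longleftrightarrow>
     markov_strategies a1 b1 W T wS qS \<and>
     (\<forall>a\<in>Aset a1. \<forall>b\<in>Bset b1.
        VR (T+1) a b = 0 \<and> VM (T+1) a b = 0 \<and> (\<forall>w\<in>W. VRh (T+1) a b w = 0)) \<and>
     (\<forall>t\<in>{1..T}. \<forall>a\<in>Aset a1. \<forall>b\<in>Bset b1. \<forall>w\<in>W.
        (\<forall>q\<ge>0. ContInt k (VR (Suc t)) a b q \<and>
                PiR p k w q a b + Cont k (VR (Suc t)) a b q \<le> VRh t a b w) \<and>
        VRh t a b w = PiR p k w (qS t a b w) a b + Cont k (VR (Suc t)) a b (qS t a b w)) \<and>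
     (\<forall>t\<in>{1..T}. \<forall>a\<in>Aset a1. \<forall>b\<in>Bset b1.
        (\<forall>w\<in>W. ContInt k (VM (Suc t)) a b (qS t a b w) \<and>
                PiM c w (qS t a b w) + Cont k (VM (Suc t)) a b (qS t a b w) \<le> VM t a b) \<and>
        VM t a b = PiM c (wS t a b) (qS t a b (wS t a b))
                   + Cont k (VM (Suc t)) a b (qS t a b (wS t a b))) \<and>
     (\<forall>t\<in>{1..T}. \<forall>a\<in>Aset a1. \<forall>b\<in>Bset b1. VR t a b = VRh t a b (wS t a b))"

definition is_MPE ::
  "real \<Rightarrow> real \<Rightarrow> real \<Rightarrow> real \<Rightarrow> real \<Rightarrow> real set \<Rightarrow> nat
   \<Rightarrow> (nat \<Rightarrow> real \<Rightarrow> real \<Rightarrow> real) \<Rightarrow> (nat \<Rightarrow> real \<Rightarrow> real \<Rightarrow> real \<Rightarrow> real) \<Rightarrow> bool" where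
  "is_MPE p c k a1 b1 W T wS qS \<longleftrightarrow> (\<exists>VR VRh VM. MPE_with p c k a1 b1 W T wS qS VR VRh VM)"

definition PiR_std :: "real \<Rightarrow> real \<Rightarrow> real \<Rightarrow> real \<Rightarrow> real \<Rightarrow> real" where
  "PiR_std p k w z a = (a - 1) * (p * Ex k a 1 (\<lambda>d. min d z) - w * z)"

definition PiM_std :: "real \<Rightarrow> real \<Rightarrow> real \<Rightarrow> real \<Rightarrow> real" where
  "PiM_std c w z a = (a - 1) * (w - c) * z"

definition Eop :: "real \<Rightarrow> (real \<Rightarrow> real) \<Rightarrow> real \<Rightarrow> real \<Rightarrow> real" where
  "Eop k f z a = (a - 1) / (a - 1 / k) * predG k (a - 1 / k) 1 z * f (a + 1)
                 + (1 - predG k (a - 1 / k) 1 z) * f a"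

definition std_strategies ::
  "real \<Rightarrow> real set \<Rightarrow> nat \<Rightarrow> (nat \<Rightarrow> real \<Rightarrow> real) \<Rightarrow> (nat \<Rightarrow> real \<Rightarrow> real \<Rightarrow> real) \<Rightarrow> bool" where
  "std_strategies a1 W T wS zS \<longleftrightarrow>
     (\<forall>t\<in>{1..T}. \<forall>a\<in>Aset a1.
        wS t a \<in> W \<and> (\<forall>w\<in>W. zS t a w \<ge> 0) \<and>
        (\<lambda>w. zS t a w) \<in> borel_measurable (restrict_space borel W))"

definition SMPS_with ::
  "real \<Rightarrow> real \<Rightarrow> real \<Rightarrow> real \<Rightarrow> real set \<Rightarrow> nat
   \<Rightarrow> (nat \<Rightarrow> real \<Rightarrow> real) \<Rightarrow> (nat \<Rightarrow> real \<Rightarrow> real \<Rightarrow> real)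
   \<Rightarrow> (nat \<Rightarrow> real \<Rightarrow> real) \<Rightarrow> (nat \<Rightarrow> real \<Rightarrow> real \<Rightarrow> real)
   \<Rightarrow> (nat \<Rightarrow> real \<Rightarrow> real) \<Rightarrow> bool" where
  "SMPS_with p c k a1 W T wS zS fR fRh fM \<longleftrightarrow>
     std_strategies a1 W T wS zS \<and>
     (\<forall>a\<in>Aset a1. fR (T+1) a = 0 \<and> fM (T+1) a = 0 \<and> (\<forall>w\<in>W. fRh (T+1) a w = 0)) \<and>
     (\<forall>t\<in>{1..T}. \<forall>a\<in>Aset a1. \<forall>w\<in>W.
        (\<forall>z\<ge>0. PiR_std p k w z a + Eop k (fR (Suc t)) z a \<le> fRh t a w) \<and>
        fRh t a w = PiR_std p k w (zS t a w) a + Eop k (fR (Suc t)) (zS t a w) a) \<and>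
     (\<forall>t\<in>{1..T}. \<forall>a\<in>Aset a1.
        (\<forall>w\<in>W. PiM_std c w (zS t a w) a + Eop k (fM (Suc t)) (zS t a w) a \<le> fM t a) \<and>
        fM t a = PiM_std c (wS t a) (zS t a (wS t a)) a + Eop k (fM (Suc t)) (zS t a (wS t a)) a) \<and>
     (\<forall>t\<in>{1..T}. \<forall>a\<in>Aset a1. fR t a = fRh t a (wS t a))"

definition is_SMPS ::
  "real \<Rightarrow> real \<Rightarrow> real \<Rightarrow> real \<Rightarrow> real set \<Rightarrow> nat
   \<Rightarrow> (nat \<Rightarrow> real \<Rightarrow> real) \<Rightarrow> (nat \<Rightarrow> real \<Rightarrow> real \<Rightarrow> real) \<Rightarrow> bool" where
  "is_SMPS p c k a1 W T wS zS \<longleftrightarrow> (\<exists>fR fRh fM. SMPS_with p c k a1 W T wS zS fR fRh fM)"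

end

theory Submission
  imports Defs "HOL-Probability.Probability" "HOL-Real_Asymp.Real_Asymp"
begin

(* The predictive law G(.|a,b) has the explicit density
   a k b^a y^(k-1) (b + y^k)^(-(a+1)), and D ~ G(.|a,b) has the law of b^(1/k) D' with
   D' ~ G(.|a,1).  Multiplying the density by (b + y^k)^(1/k) turns shape a into a - 1/k, up to
   the factor a b^(1/k)/(a - 1/k).  Hence value functions of the form b^(1/k)/(a-1) f(a) are
   carried by the continuation operator of the game to b^(1/k)/(a-1) E[f, q/b^(1/k) | a], and the
   payoffs scale the same way: every standardized solution rescales to an MPE, which gives (c),
   and (b) follows from (a).
   For (a), proceed backwards from period T.  The retailer's standardized objective is
   continuous in (w, z) and falls below its value at z = 0 once z is large, uniformly in
   w >= wlo, so best responses can be sought in a compact interval.  The manufacturer's continuous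
   objective then attains its maximum on the compact graph of the best-response correspondence.
   Since the retailer's objective has increasing differences in (-w, z), every best-response
   selection is antitone in w and therefore Borel measurable. *)

section \<open>The predictive distribution\<close>

lemma predG_eq:
  assumes "b > 0"
  shows "predG k a b y = 1 - (b / (b + max y 0 powr k)) powr a"
  using assms by (auto simp: predG_def ell_def max_def)

lemma predG_nonpos:
  assumes "b > 0" "y \<le> 0"
  shows "predG k a b y = 0"
  using assms by (simp add: predG_eq max_absorb2)

lemma one_minus_predG:
  assumes "b > 0" "q \<ge> 0"
  shows "1 - predG k a b q = (b / (b + q powr k)) powr a"
  using assms by (simp add: predG_def ell_def)

lemma predG_nonneg:
  assumes "b > 0" "a \<ge> 0"
  shows "0 \<le> predG k a b y"
proof -
  have "b / (b + max y 0 powr k) \<le> 1"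
    using assms by (simp add: add_pos_nonneg)
  then show ?thesis
    using assms by (simp add: predG_eq powr_le1)
qed

lemma predG_le_1:
  assumes "b > 0"
  shows "predG k a b y \<le> 1"
  using assms by (simp add: predG_eq)

lemma continuous_on_predG:
  assumes "k > 0" "b > 0"
  shows "continuous_on UNIV (predG k a b)"
proof -
  have pos: "b + max y 0 powr k > 0" for y
    using assms by (simp add: add_pos_nonneg)
  then have nonzero: "b + max y 0 powr k \<noteq> 0" for y
    by (metis less_irrefl)
  have "continuous_on UNIV (\<lambda>y. max y 0 powr k)"
    by (intro continuous_on_powr' continuous_intros) (use assms in auto)
  then have "continuous_on UNIV (\<lambda>y. b / (b + max y 0 powr k))"
    by (intro continuous_on_divide continuous_on_add continuous_on_const) (simp_all add: nonzero)
  then have "continuous_on UNIV (\<lambda>y. 1 - (b / (b + max y 0 powr k)) powr a)"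
    using assms by (intro continuous_on_diff continuous_on_const continuous_on_powr)
      (simp_all add: pos nonzero)
  then show ?thesis
    using assms by (simp add: predG_eq)
qed

lemma predG_right_continuous:
  assumes "k > 0" "b > 0"
  shows "continuous (at_right x) (predG k a b)"
  using continuous_on_predG[OF assms]
  by (simp add: continuous_on_eq_continuous_within continuous_at_imp_continuous_at_within)

lemma predG_mono:
  assumes "k > 0" "b > 0" "a \<ge> 0" "x \<le> y"
  shows "predG k a b x \<le> predG k a b y"
proof -
  have "max x 0 powr k \<le> max y 0 powr k"
    using assms by (intro powr_mono2) auto
  then have "b / (b + max y 0 powr k) \<le> b / (b + max x 0 powr k)"
    using assms by (intro divide_left_mono) (auto intro!: add_pos_nonneg mult_pos_pos)
  then have "(b / (b + max y 0 powr k)) powr a \<le> (b / (b + max x 0 powr k)) powr a"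
    using assms by (intro powr_mono2) (auto intro!: divide_nonneg_nonneg add_nonneg_nonneg)
  then show ?thesis
    using assms by (simp add: predG_eq)
qed

lemma predG_at_bot:
  assumes "b > 0"
  shows "(predG k a b \<longlongrightarrow> 0) at_bot"
  by (rule tendsto_eventually)
    (use assms in \<open>auto simp: eventually_at_bot_linorder predG_nonpos intro!: exI[of _ 0]\<close>)

lemma predG_at_top:
  assumes "k > 0" "b > 0" "a > 0"
  shows "(predG k a b \<longlongrightarrow> 1) at_top"
proof -
  have "((\<lambda>y. 1 - (b / (b + y powr k)) powr a) \<longlongrightarrow> 1) at_top"
    using assms by real_asymp
  moreover have "\<forall>\<^sub>F y in at_top. 1 - (b / (b + y powr k)) powr a = predG k a b y"
    using assms
    by (auto simp: eventually_at_top_linorder one_minus_predG[symmetric] intro: exI[of _ 0])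
  ultimately show ?thesis
    by (rule Lim_transform_eventually)
qed

lemma predG_rescale:
  assumes "k > 0" "b > 0"
  shows "predG k a 1 (x / b powr (1/k)) = predG k a b x"
proof (cases "x < 0")
  case True
  then show ?thesis
    using assms by (simp add: predG_def divide_neg_pos)
next
  case False
  have "\<not> x / b powr (1/k) < 0"
    using False assms by (simp add: not_less)
  moreover have "(x / b powr (1/k)) powr k = x powr k / b"
    using False assms by (simp add: powr_divide powr_powr)
  moreover have "1 / (1 + x powr k / b) = b / (b + x powr k)"
    using assms by (simp add: field_simps add_pos_nonneg)
  ultimately show ?thesis
    using False assms by (simp add: predG_def ell_def)
qed

lemma real_distribution_pred_dist:
  assumes "k > 0" "b > 0" "a > 0"
  shows "real_distribution (pred_dist k a b)"
  unfolding pred_dist_def using assms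
  by (intro real_distribution_interval_measure predG_mono predG_right_continuous predG_at_bot
      predG_at_top) auto

lemma prob_space_pred_dist:
  assumes "k > 0" "b > 0" "a > 0"
  shows "prob_space (pred_dist k a b)"
  using real_distribution_pred_dist[OF assms] by (simp add: real_distribution_def)

lemma cdf_pred_dist:
  assumes "k > 0" "b > 0" "a > 0"
  shows "cdf (pred_dist k a b) = predG k a b"
  unfolding pred_dist_def using assms
  by (intro cdf_interval_measure predG_mono predG_right_continuous predG_at_bot) auto

lemma sets_pred_dist [simp, measurable_cong]: "sets (pred_dist k a b) = sets borel"
  by (simp add: pred_dist_def)

lemma space_pred_dist [simp]: "space (pred_dist k a b) = UNIV"
  by (simp add: pred_dist_def)

lemma measure_pred_dist_atMost:
  assumes "k > 0" "b > 0" "a > 0"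
  shows "measure (pred_dist k a b) {..x} = predG k a b x"
  using cdf_pred_dist[OF assms] by (metis cdf_def)

lemma measure_pred_dist_singleton:
  assumes "k > 0" "b > 0" "a > 0"
  shows "measure (pred_dist k a b) {x} = 0"
proof -
  interpret finite_borel_measure "pred_dist k a b"
    using real_distribution_pred_dist[OF assms] real_distribution.finite_borel_measure_M by blast
  show ?thesis
    using isCont_cdf[of x] cdf_pred_dist[OF assms] continuous_on_predG[OF assms(1,2)]
    by (simp add: continuous_on_eq_continuous_within)
qed

lemma measure_pred_dist_lessThan:
  assumes "k > 0" "b > 0" "a > 0"
  shows "measure (pred_dist k a b) {..<x} = predG k a b x"
proof -
  interpret prob_space "pred_dist k a b"
    using prob_space_pred_dist[OF assms] .
  have "{..<x} = {..x} - {x}"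
    by auto
  then show ?thesis
    using measure_pred_dist_atMost[OF assms] measure_pred_dist_singleton[OF assms]
    by (simp add: finite_measure_Diff)
qed

lemma measure_pred_dist_greaterThan:
  assumes "k > 0" "b > 0" "a > 0"
  shows "measure (pred_dist k a b) {x<..} = 1 - predG k a b x"
proof -
  interpret prob_space "pred_dist k a b"
    using prob_space_pred_dist[OF assms] .
  have "{x<..} = space (pred_dist k a b) - {..x}"
    by auto
  then show ?thesis
    using prob_compl[of "{..x}"] measure_pred_dist_atMost[OF assms] by simp
qed

lemma AE_pred_dist_nonneg:
  assumes "k > 0" "b > 0" "a > 0"
  shows "AE d in pred_dist k a b. 0 \<le> d"
proof -
  interpret prob_space "pred_dist k a b"
    using prob_space_pred_dist[OF assms] .
  have "{..<0} \<in> null_sets (pred_dist k a b)"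
    using measure_pred_dist_lessThan[OF assms, of 0] predG_nonpos[OF assms(2)]
    by (simp add: null_sets_def emeasure_eq_measure)
  from AE_not_in[OF this] show ?thesis
    by (rule eventually_mono) auto
qed

lemma AE_pred_dist_neq:
  assumes "k > 0" "b > 0" "a > 0"
  shows "AE d in pred_dist k a b. d \<noteq> q"
proof -
  interpret prob_space "pred_dist k a b"
    using prob_space_pred_dist[OF assms] .
  have "{q} \<in> null_sets (pred_dist k a b)"
    using measure_pred_dist_singleton[OF assms, of q] by (simp add: null_sets_def emeasure_eq_measure)
  from AE_not_in[OF this] show ?thesis
    by (rule eventually_mono) auto
qed

definition pred_density :: "real \<Rightarrow> real \<Rightarrow> real \<Rightarrow> real \<Rightarrow> real" where
  "pred_density k a b x =
     (if x \<le> 0 then 0 else a * k * b powr a * x powr (k - 1) * (b + x powr k) powr (-(a + 1)))"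

lemma pred_density_nonneg: "a \<ge> 0 \<Longrightarrow> k \<ge> 0 \<Longrightarrow> pred_density k a b x \<ge> 0"
  by (simp add: pred_density_def)

lemma borel_measurable_pred_density [measurable]: "pred_density k a b \<in> borel_measurable borel"
  unfolding pred_density_def by measurable

lemma predG_has_real_derivative:
  assumes "k > 0" "b > 0" "x > 0"
  shows "(predG k a b has_real_derivative pred_density k a b x) (at x)"
proof -
  define F where "F y = 1 - b powr a * (b + y powr k) powr (-a)" for y
  have pos: "b + x powr k > 0"
    using assms by (simp add: add_pos_nonneg)
  have "((\<lambda>y. b + y powr k) has_real_derivative k * x powr (k - 1)) (at x)"
    using assms by (auto intro!: derivative_eq_intros)
  from DERIV_fun_powr[OF this pos, of "-a"]
  have "((\<lambda>y. (b + y powr k) powr (-a)) has_real_derivative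
      -a * (b + x powr k) powr (-(a + 1)) * (k * x powr (k - 1))) (at x)"
    unfolding of_nat_1 minus_add_distrib[of a 1] diff_conv_add_uminus .
  then have "(F has_real_derivative
      0 - b powr a * (-a * (b + x powr k) powr (-(a + 1)) * (k * x powr (k - 1)))) (at x)"
    unfolding F_def by (intro DERIV_diff DERIV_const DERIV_cmult)
  also have "0 - b powr a * (-a * (b + x powr k) powr (-(a + 1)) * (k * x powr (k - 1)))
      = pred_density k a b x"
    using assms by (simp add: pred_density_def algebra_simps)
  finally show ?thesis
  proof (rule has_field_derivative_transform_within_open[where S="{0<..}"])
    show "F y = predG k a b y" if "y \<in> {0<..}" for y
      using that assms by (simp add: F_def predG_def ell_def powr_divide powr_minus_divide)
  qed (use assms in auto)
qed

lemma pred_density_has_integral: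
  assumes "k > 0" "b > 0" "x \<le> y"
  shows "((\<lambda>t. pred_density k a b t * indicator {x..y} t)
           has_integral (predG k a b y - predG k a b x)) UNIV"
proof (cases "y \<le> 0")
  case True
  then have "(\<lambda>t. pred_density k a b t * indicator {x..y} t) = (\<lambda>_. 0)"
    by (auto simp: fun_eq_iff pred_density_def indicator_def)
  then show ?thesis
    using True assms by (simp add: predG_nonpos)
next
  case False
  define x' where "x' = max x 0"
  have "(pred_density k a b has_integral (predG k a b y - predG k a b x')) {x'..y}"
  proof (rule fundamental_theorem_of_calculus_interior)
    show "continuous_on {x'..y} (predG k a b)"
      using continuous_on_predG[OF assms(1,2)] continuous_on_subset by blast
    show "(predG k a b has_vector_derivative pred_density k a b t) (at t)" if "t \<in> {x'<..<y}" for t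
      using predG_has_real_derivative[OF assms(1,2), of t] that
      by (auto simp: x'_def has_real_derivative_iff_has_vector_derivative)
  qed (use False assms in \<open>simp add: x'_def\<close>)
  moreover have "predG k a b x' = predG k a b x"
    using assms by (auto simp: x'_def max_def predG_nonpos)
  moreover have "(\<lambda>t. if t \<in> {x'..y} then pred_density k a b t else 0)
      = (\<lambda>t. pred_density k a b t * indicator {x..y} t)"
    by (auto simp: fun_eq_iff x'_def pred_density_def indicator_def)
  ultimately show ?thesis
    using has_integral_restrict_UNIV[of "{x'..y}" "pred_density k a b"] by simp
qed

lemma pred_dist_eq_density:
  assumes "k > 0" "b > 0" "a > 0"
  shows "pred_dist k a b = density lborel (pred_density k a b)"
proof (rule measure_eqI_generator_eq[where \<Omega>=UNIV and E="range (\<lambda>(x, y). {x<..y::real})"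
      and A="\<lambda>i. {- real i<..real i}"])
  fix X assume "X \<in> range (\<lambda>(x, y). {x<..y::real})"
  then obtain x y where X: "X = {x<..y}"
    by auto
  show "emeasure (pred_dist k a b) X = emeasure (density lborel (pred_density k a b)) X"
  proof (cases "x \<le> y")
    case True
    have "emeasure (density lborel (pred_density k a b)) X
        = (\<integral>\<^sup>+ t. pred_density k a b t * indicator {x<..y} t \<partial>lborel)"
      unfolding X using assms
      by (subst emeasure_density) (auto simp: ennreal_mult' pred_density_nonneg
          intro!: nn_integral_cong split: split_indicator)
    also have "\<dots> = (\<integral>\<^sup>+ t. pred_density k a b t * indicator {x..y} t \<partial>lborel)"
      by (intro nn_integral_cong_AE eventually_mono[OF AE_lborel_singleton[of x]])
        (auto split: split_indicator)
    also have "\<dots> = predG k a b y - predG k a b x"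
      using assms True
      by (intro nn_integral_has_integral_lborel pred_density_has_integral) (auto simp: pred_density_nonneg)
    also have "\<dots> = emeasure (pred_dist k a b) X"
      unfolding pred_dist_def X using assms True
      by (intro emeasure_interval_measure_Ioc[symmetric] predG_mono predG_right_continuous) auto
    finally show ?thesis ..
  qed (simp add: X)
next
  show "emeasure (pred_dist k a b) {- real i<..real i} \<noteq> \<infinity>" for i
    unfolding pred_dist_def using assms
    by (subst emeasure_interval_measure_Ioc) (auto intro: predG_mono predG_right_continuous)
next
  show "Int_stable (range (\<lambda>(x, y). {x<..y::real}))"
    by (auto simp: Int_stable_def)
qed (auto simp: borel_sigma_sets_Ioc UN_Ioc_eq_UNIV)

section \<open>Rescaling the belief state\<close>

lemma pred_dist_rescale:
  assumes "k > 0" "b > 0" "a > 0"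
  shows "pred_dist k a b = distr (pred_dist k a 1) borel (\<lambda>u. b powr (1/k) * u)"
proof (rule cdf_unique)
  interpret prob_space "pred_dist k a 1"
    using prob_space_pred_dist assms by simp
  show "real_distribution (pred_dist k a b)"
    using real_distribution_pred_dist assms by blast
  show "real_distribution (distr (pred_dist k a 1) borel (\<lambda>u. b powr (1/k) * u))"
    by (intro real_distribution_distr) simp
  show "cdf (pred_dist k a b) = cdf (distr (pred_dist k a 1) borel (\<lambda>u. b powr (1/k) * u))"
  proof
    fix x
    have "(\<lambda>u. b powr (1/k) * u) -` {..x} = {..x / b powr (1/k)}"
      using assms by (auto simp: pos_le_divide_eq mult.commute)
    then have "cdf (distr (pred_dist k a 1) borel (\<lambda>u. b powr (1/k) * u)) x
        = measure (pred_dist k a 1) {..x / b powr (1/k)}"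
      unfolding cdf_def by (subst measure_distr) auto
    also have "\<dots> = predG k a b x"
      using assms by (simp add: measure_pred_dist_atMost predG_rescale)
    finally show "cdf (pred_dist k a b) x = cdf (distr (pred_dist k a 1) borel (\<lambda>u. b powr (1/k) * u)) x"
      using assms by (simp add: cdf_pred_dist)
  qed
qed

lemma Ex_min_rescale:
  assumes "k > 0" "b > 0" "a > 0"
  shows "Ex k a b (\<lambda>d. min d q) = b powr (1/k) * Ex k a 1 (\<lambda>u. min u (q / b powr (1/k)))"
proof -
  have "min (b powr (1/k) * u) q = b powr (1/k) * min u (q / b powr (1/k))" for u
    using assms by (auto simp: min_def pos_le_divide_eq mult.commute)
  then show ?thesis
    unfolding Ex_def using assms by (simp add: pred_dist_rescale[OF assms] integral_distr)
qed

lemma integrable_min_pred_dist: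
  assumes "k > 0" "b > 0" "a > 0"
  shows "integrable (pred_dist k a b) (\<lambda>d. min d z)"
proof -
  interpret prob_space "pred_dist k a b"
    using prob_space_pred_dist[OF assms] .
  show ?thesis
    by (rule integrable_const_bound[where B="\<bar>z\<bar>"])
      (auto intro: eventually_mono[OF AE_pred_dist_nonneg[OF assms]])
qed

lemma Ex_min_0:
  assumes "k > 0" "b > 0" "a > 0"
  shows "Ex k a b (\<lambda>d. min d 0) = 0"
proof -
  have "Ex k a b (\<lambda>d. min d 0) = (\<integral>d. 0 \<partial>pred_dist k a b)"
    unfolding Ex_def
    by (intro integral_cong_AE) (auto intro: eventually_mono[OF AE_pred_dist_nonneg[OF assms]])
  then show ?thesis
    by simp
qed

lemma lipschitz_Ex_min:
  assumes "k > 0" "b > 0" "a > 0"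
  shows "1-lipschitz_on UNIV (\<lambda>z. Ex k a b (\<lambda>d. min d z))"
proof (rule lipschitz_onI)
  interpret prob_space "pred_dist k a b"
    using prob_space_pred_dist[OF assms] .
  have le: "Ex k a b (\<lambda>d. min d z) \<le> Ex k a b (\<lambda>d. min d z') + \<bar>z - z'\<bar>" for z z'
  proof -
    have "Ex k a b (\<lambda>d. min d z) \<le> (\<integral>d. min d z' + \<bar>z - z'\<bar> \<partial>pred_dist k a b)"
      unfolding Ex_def using assms
      by (intro integral_mono integrable_min_pred_dist Bochner_Integration.integrable_add) auto
    then show ?thesis
      unfolding Ex_def using assms prob_space by (simp add: integrable_min_pred_dist)
  qed
  show "dist (Ex k a b (\<lambda>d. min d z)) (Ex k a b (\<lambda>d. min d z')) \<le> 1 * dist z z'" for z z'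
    using le[of z z'] le[of z' z] by (simp add: dist_real_def abs_minus_commute)
qed simp

lemma Ex_min_le:
  assumes "k > 0" "b > 0" "a > 0" "z \<ge> 0" "z0 \<ge> 0"
  shows "Ex k a b (\<lambda>d. min d z) \<le> z0 + z * (1 - predG k a b z0)"
proof -
  interpret prob_space "pred_dist k a b"
    using prob_space_pred_dist[OF assms(1-3)] .
  have int: "integrable (pred_dist k a b) (indicator {z0<..} :: real \<Rightarrow> real)"
    by (rule integrable_const_bound[where B=1]) (auto split: split_indicator)
  have "Ex k a b (\<lambda>d. min d z) \<le> (\<integral>d. z0 + z * indicator {z0<..} d \<partial>pred_dist k a b)"
    unfolding Ex_def using assms int
    by (intro integral_mono_AE integrable_min_pred_dist eventually_mono[OF AE_pred_dist_nonneg])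
      (auto split: split_indicator)
  also have "\<dots> = z0 + z * (1 - predG k a b z0)"
    using int prob_space measure_pred_dist_greaterThan[OF assms(1-3)] by simp
  finally show ?thesis .
qed

lemma pred_density_size_bias:
  assumes "k > 0" "a > 1/k"
  shows "(b + d powr k) powr (1/k) * pred_density k a b d
       = a * b powr (1/k) / (a - 1/k) * pred_density k (a - 1/k) b d"
proof (cases "d \<le> 0")
  case False
  define B where "B = b + d powr k"
  define a' where "a' = a - 1/k"
  have "a' > 0"
    using assms by (simp add: a'_def)
  have b: "b powr (1/k) * b powr a' = b powr a"
    by (simp add: a'_def powr_add[symmetric])
  have "1/k + -(a + 1) = -(a' + 1)"
    by (simp add: a'_def)
  then have B: "B powr (1/k) * B powr (-(a + 1)) = B powr (-(a' + 1))"
    by (metis powr_add)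
  have "a * b powr (1/k) / a' * (a' * k * b powr a' * d powr (k - 1) * B powr (-(a' + 1)))
      = a * k * (b powr (1/k) * b powr a') * d powr (k - 1) * B powr (-(a' + 1))"
    using \<open>a' > 0\<close> by simp
  also have "\<dots> = B powr (1/k) * (a * k * b powr a * d powr (k - 1) * B powr (-(a + 1)))"
    unfolding b B[symmetric] by (simp add: ac_simps)
  finally show ?thesis
    using False by (simp add: pred_density_def B_def a'_def)
qed (simp add: pred_density_def)

lemma integral_size_bias:
  assumes "k > 0" "b > 0" "a > 1/k"
  shows "(\<integral>d. indicator {0..<q} d * (b + d powr k) powr (1/k) \<partial>pred_dist k a b)
       = a * b powr (1/k) / (a - 1/k) * predG k (a - 1/k) b q"
proof -
  have a: "a > 0" "a - 1/k > 0"
    using assms by (auto intro: less_trans[of 0 "1/k"])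
  have "pred_density k a b d * (indicator {0..<q} d * (b + d powr k) powr (1/k))
      = a * b powr (1/k) / (a - 1/k) * (pred_density k (a - 1/k) b d * indicator {..<q} d)" for d
  proof (cases "d < 0")
    case False
    then show ?thesis
      using pred_density_size_bias[OF assms(1,3), of b d] by (simp add: indicator_def ac_simps)
  qed (simp add: pred_density_def)
  then have "(\<integral>d. indicator {0..<q} d * (b + d powr k) powr (1/k) \<partial>pred_dist k a b)
      = a * b powr (1/k) / (a - 1/k) * (\<integral>d. pred_density k (a - 1/k) b d * indicator {..<q} d \<partial>lborel)"
    using assms a by (simp add: pred_dist_eq_density integral_density pred_density_nonneg)
  also have "(\<integral>d. pred_density k (a - 1/k) b d * indicator {..<q} d \<partial>lborel)
      = (\<integral>d. indicator {..<q} d \<partial>density lborel (pred_density k (a - 1/k) b))"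
    using a by (subst integral_density) (auto simp: pred_density_nonneg assms less_imp_le)
  also have "\<dots> = measure (pred_dist k (a - 1/k) b) {..<q}"
    using assms a by (simp add: pred_dist_eq_density)
  finally show ?thesis
    using assms a by (simp add: measure_pred_dist_lessThan)
qed

lemma one_minus_predG_size_bias:
  assumes "b > 0" "q \<ge> 0"
  shows "(1 - predG k a b q) * (b + q powr k) powr (1/k) = b powr (1/k) * (1 - predG k (a - 1/k) b q)"
proof -
  have B: "b + q powr k > 0"
    using assms by (simp add: add_pos_nonneg)
  have "(b / (b + q powr k)) powr (a - 1/k)
      = (b / (b + q powr k)) powr a / (b powr (1/k) / (b + q powr k) powr (1/k))"
    by (simp add: powr_diff powr_divide)
  then show ?thesis
    using assms B by (simp add: one_minus_predG field_simps)
qed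

lemma integrable_size_bias:
  assumes "k > 0" "b > 0" "a > 0" "q \<ge> 0"
  shows "integrable (pred_dist k a b) (\<lambda>d. indicator {0..<q} d * (b + d powr k) powr (1/k))"
proof -
  interpret prob_space "pred_dist k a b"
    using prob_space_pred_dist[OF assms(1-3)] .
  have "(b + d powr k) powr (1/k) \<le> (b + q powr k) powr (1/k)" if "d \<in> {0..<q}" for d
    using that assms by (intro powr_mono2 add_left_mono) (auto intro: add_pos_nonneg)
  then show ?thesis
    by (intro integrable_const_bound[where B="(b + q powr k) powr (1/k)"]) (auto split: split_indicator)
qed

lemma Cont_integrand_AE:
  fixes f :: "real \<Rightarrow> real"
  assumes "k > 0" "b > 0" "a > 0"
  shows "AE d in pred_dist k a b. case_prod (\<lambda>a b. b powr (1/k) / (a - 1) * f a) (Phi k a b q d)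
     = indicator {0..<q} d * (b + d powr k) powr (1/k) * (f (a + 1) / a)
       + indicator {q<..} d * ((b + q powr k) powr (1/k) / (a - 1) * f a)"
  using AE_pred_dist_nonneg[OF assms] AE_pred_dist_neq[OF assms, of q]
  by eventually_elim (auto simp: Phi_def ell_def min_def indicator_def)

lemma ContInt_scaled:
  fixes f :: "real \<Rightarrow> real"
  assumes "k > 0" "b > 0" "a > 0" "q \<ge> 0"
  shows "ContInt k (\<lambda>a b. b powr (1/k) / (a - 1) * f a) a b q"
proof -
  interpret prob_space "pred_dist k a b"
    using prob_space_pred_dist[OF assms(1-3)] .
  have "integrable (pred_dist k a b) (indicator {q<..} :: real \<Rightarrow> real)"
    by (intro integrable_const_bound[where B=1]) (auto split: split_indicator)
  then have "integrable (pred_dist k a b)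
      (\<lambda>d. indicator {0..<q} d * (b + d powr k) powr (1/k) * (f (a + 1) / a)
         + indicator {q<..} d * ((b + q powr k) powr (1/k) / (a - 1) * f a))"
    using integrable_size_bias[OF assms]
    by (intro Bochner_Integration.integrable_add integrable_mult_left)
  moreover have "(\<lambda>d. case_prod (\<lambda>a b. b powr (1/k) / (a - 1) * f a) (Phi k a b q d))
      \<in> borel_measurable (pred_dist k a b)"
    unfolding Phi_def ell_def prod.case by measurable
  ultimately show ?thesis
    unfolding ContInt_def
    by (rule integrable_cong_AE_imp)
      (use Cont_integrand_AE[OF assms(1-3), of f q] in \<open>auto elim!: eventually_mono\<close>)
qed

lemma Cont_scaled:
  fixes f :: "real \<Rightarrow> real"
  assumes "k > 0" "b > 0" "a > 1" "a > 1/k" "q \<ge> 0"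
  shows "Cont k (\<lambda>a b. b powr (1/k) / (a - 1) * f a) a b q
       = b powr (1/k) / (a - 1) * Eop k f (q / b powr (1/k)) a"
proof -
  define P where "P = pred_dist k a b"
  define s where "s = b powr (1/k)"
  define a' where "a' = a - 1/k"
  define G' where "G' = predG k a' b q"
  have a: "a > 0" "a' > 0"
    using assms by (auto simp: a'_def)
  interpret prob_space P
    using prob_space_pred_dist[OF assms(1,2) a(1)] by (simp add: P_def)
  have ind: "integrable P (indicator {q<..} :: real \<Rightarrow> real)"
    by (intro integrable_const_bound[where B=1]) (auto simp: P_def split: split_indicator)
  have "Cont k (\<lambda>a b. b powr (1/k) / (a - 1) * f a) a b q
      = (\<integral>d. indicator {0..<q} d * (b + d powr k) powr (1/k) * (f (a + 1) / a)
           + indicator {q<..} d * ((b + q powr k) powr (1/k) / (a - 1) * f a) \<partial>P)"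
    unfolding Cont_def Ex_def P_def using Cont_integrand_AE[OF assms(1,2) a(1), of f q]
    by (intro integral_cong_AE) (auto simp: Phi_def ell_def elim!: eventually_mono)
  also have "\<dots> = a * s / a' * G' * (f (a + 1) / a)
      + (1 - predG k a b q) * (b + q powr k) powr (1/k) * (f a / (a - 1))"
    using integrable_size_bias[OF assms(1,2) a(1) assms(5)] ind
      integral_size_bias[OF assms(1,2,4), of q] measure_pred_dist_greaterThan[OF assms(1,2) a(1), of q]
    by (simp add: P_def s_def G'_def a'_def)
  also have "\<dots> = a * s / a' * G' * (f (a + 1) / a) + s * (1 - G') * (f a / (a - 1))"
    using one_minus_predG_size_bias[OF assms(2,5), where a=a and k=k]
    by (simp add: s_def G'_def a'_def)
  also have "\<dots> = s / (a - 1) * ((a - 1) / a' * G' * f (a + 1) + (1 - G') * f a)"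
    using a assms(3) by (simp add: field_simps)
  also have "\<dots> = s / (a - 1) * Eop k f (q / s) a"
    using predG_rescale[OF assms(1,2)] by (simp add: Eop_def s_def G'_def a'_def)
  finally show ?thesis
    by (simp add: s_def)
qed

lemma PiR_plus_Cont_scaled:
  fixes f :: "real \<Rightarrow> real"
  assumes "k > 0" "b > 0" "a > 1" "a > 1/k" "q \<ge> 0"
  shows "PiR p k w q a b + Cont k (\<lambda>a b. b powr (1/k) / (a - 1) * f a) a b q
       = b powr (1/k) / (a - 1) * (PiR_std p k w (q / b powr (1/k)) a + Eop k f (q / b powr (1/k)) a)"
proof -
  have "PiR p k w q a b = b powr (1/k) / (a - 1) * PiR_std p k w (q / b powr (1/k)) a"
  proof -
    define s where "s = b powr (1/k)"
    have "s > 0" "a > 0"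
      using assms by (simp_all add: s_def)
    then show ?thesis
      unfolding PiR_def PiR_std_def Ex_min_rescale[OF assms(1,2) \<open>a > 0\<close>] s_def[symmetric]
      using assms by (simp add: field_simps)
  qed
  then show ?thesis
    using Cont_scaled[OF assms] by (simp add: distrib_left)
qed

lemma PiM_plus_Cont_scaled:
  fixes f :: "real \<Rightarrow> real"
  assumes "k > 0" "b > 0" "a > 1" "a > 1/k" "q \<ge> 0"
  shows "PiM c w q + Cont k (\<lambda>a b. b powr (1/k) / (a - 1) * f a) a b q
       = b powr (1/k) / (a - 1) * (PiM_std c w (q / b powr (1/k)) a + Eop k f (q / b powr (1/k)) a)"
proof -
  have "PiM c w q = b powr (1/k) / (a - 1) * PiM_std c w (q / b powr (1/k)) a"
    using assms by (simp add: PiM_def PiM_std_def)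
  then show ?thesis
    using Cont_scaled[OF assms] by (simp add: distrib_left)
qed

lemma borel_measurable_powr_times:
  fixes g :: "real \<Rightarrow> real"
  assumes "g \<in> borel_measurable (restrict_space borel W)"
  shows "(\<lambda>(b, w). b powr r * g w) \<in> borel_measurable (restrict_space borel (B \<times> W))"
proof -
  have "snd \<in> measurable (restrict_space borel (B \<times> W)) (restrict_space borel W)"
    by (rule measurable_restrict_space3) (auto simp: borel_prod[symmetric])
  from measurable_compose[OF this assms]
  have "(\<lambda>x. g (snd x)) \<in> borel_measurable (restrict_space borel (B \<times> W))" .
  moreover have "(\<lambda>x. fst x powr r) \<in> borel_measurable (restrict_space borel (B \<times> (W :: real set)))"
    by (intro measurable_restrict_space1) (auto simp: borel_prod[symmetric])
  ultimately have "(\<lambda>x. fst x powr r * g (snd x)) \<in> borel_measurable (restrict_space borel (B \<times> W))"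
    by measurable
  then show ?thesis
    by (simp add: case_prod_beta')
qed

lemma std_strategies_imp_markov_strategies:
  assumes "std_strategies a1 W T wS zS"
  shows "markov_strategies a1 b1 W T (\<lambda>t a b. wS t a) (\<lambda>t a b w. b powr (1/k) * zS t a w)"
  using assms unfolding std_strategies_def markov_strategies_def
  by (simp add: borel_measurable_powr_times)

lemma Aset_ge: "a \<in> Aset a1 \<Longrightarrow> a \<ge> a1"
  by (auto simp: Aset_def)

lemma retailer_condition_scaled:
  fixes f :: "real \<Rightarrow> real"
  assumes "k > 0" "b > 0" "a > 1" "a > 1/k" "z \<ge> 0"
    and opt: "\<forall>z'\<ge>0. PiR_std p k w z' a + Eop k f z' a \<le> h"
    and val: "h = PiR_std p k w z a + Eop k f z a"
  shows "(\<forall>q\<ge>0. ContInt k (\<lambda>a b. b powr (1/k) / (a - 1) * f a) a b q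
            \<and> PiR p k w q a b + Cont k (\<lambda>a b. b powr (1/k) / (a - 1) * f a) a b q
              \<le> b powr (1/k) / (a - 1) * h)
         \<and> b powr (1/k) / (a - 1) * h = PiR p k w (b powr (1/k) * z) a b
             + Cont k (\<lambda>a b. b powr (1/k) / (a - 1) * f a) a b (b powr (1/k) * z)"
proof (intro conjI allI impI)
  fix q :: real assume "q \<ge> 0"
  then show "ContInt k (\<lambda>a b. b powr (1/k) / (a - 1) * f a) a b q"
    using assms by (intro ContInt_scaled) auto
  have "PiR_std p k w (q / b powr (1/k)) a + Eop k f (q / b powr (1/k)) a \<le> h"
    using opt \<open>q \<ge> 0\<close> by simp
  then show "PiR p k w q a b + Cont k (\<lambda>a b. b powr (1/k) / (a - 1) * f a) a b q
      \<le> b powr (1/k) / (a - 1) * h"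
    unfolding PiR_plus_Cont_scaled[OF assms(1-4) \<open>q \<ge> 0\<close>] using assms by (intro mult_left_mono) auto
next
  have "b powr (1/k) * z \<ge> 0"
    using assms by simp
  from PiR_plus_Cont_scaled[OF assms(1-4) this, of p w f]
  show "b powr (1/k) / (a - 1) * h = PiR p k w (b powr (1/k) * z) a b
      + Cont k (\<lambda>a b. b powr (1/k) / (a - 1) * f a) a b (b powr (1/k) * z)"
    using assms val by simp
qed

lemma manufacturer_condition_scaled:
  fixes f :: "real \<Rightarrow> real"
  assumes "k > 0" "b > 0" "a > 1" "a > 1/k" "w0 \<in> W"
    and nonneg: "\<forall>w\<in>W. zsel w \<ge> 0"
    and opt: "\<forall>w\<in>W. PiM_std c w (zsel w) a + Eop k f (zsel w) a \<le> h"
    and val: "h = PiM_std c w0 (zsel w0) a + Eop k f (zsel w0) a"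
  shows "(\<forall>w\<in>W. ContInt k (\<lambda>a b. b powr (1/k) / (a - 1) * f a) a b (b powr (1/k) * zsel w)
            \<and> PiM c w (b powr (1/k) * zsel w)
                + Cont k (\<lambda>a b. b powr (1/k) / (a - 1) * f a) a b (b powr (1/k) * zsel w)
              \<le> b powr (1/k) / (a - 1) * h)
         \<and> b powr (1/k) / (a - 1) * h = PiM c w0 (b powr (1/k) * zsel w0)
             + Cont k (\<lambda>a b. b powr (1/k) / (a - 1) * f a) a b (b powr (1/k) * zsel w0)"
proof (intro conjI ballI)
  fix w assume "w \<in> W"
  then have "b powr (1/k) * zsel w \<ge> 0"
    using nonneg by simp
  then show "ContInt k (\<lambda>a b. b powr (1/k) / (a - 1) * f a) a b (b powr (1/k) * zsel w)"
    using assms by (intro ContInt_scaled) auto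
  show "PiM c w (b powr (1/k) * zsel w)
      + Cont k (\<lambda>a b. b powr (1/k) / (a - 1) * f a) a b (b powr (1/k) * zsel w)
    \<le> b powr (1/k) / (a - 1) * h"
    unfolding PiM_plus_Cont_scaled[OF assms(1-4) \<open>b powr (1/k) * zsel w \<ge> 0\<close>]
    using assms \<open>w \<in> W\<close> by (intro mult_left_mono) auto
next
  have "b powr (1/k) * zsel w0 \<ge> 0"
    using assms by simp
  from PiM_plus_Cont_scaled[OF assms(1-4) this, of c w0 f]
  show "b powr (1/k) / (a - 1) * h = PiM c w0 (b powr (1/k) * zsel w0)
      + Cont k (\<lambda>a b. b powr (1/k) / (a - 1) * f a) a b (b powr (1/k) * zsel w0)"
    using assms val by simp
qed

lemma SMPS_with_imp_MPE_with:
  assumes k: "k > 0" and b1: "b1 > 0" and a1: "a1 > max 1 (1 / k)"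
    and S: "SMPS_with p c k a1 W T wS zS fR fRh fM"
  shows "MPE_with p c k a1 b1 W T (\<lambda>t a b. wS t a) (\<lambda>t a b w. b powr (1/k) * zS t a w)
           (\<lambda>t a b. b powr (1/k) / (a - 1) * fR t a) (\<lambda>t a b w. b powr (1/k) / (a - 1) * fRh t a w)
           (\<lambda>t a b. b powr (1/k) / (a - 1) * fM t a)"
proof -
  have a_bounds: "a > 1" "a > 1/k" if "a \<in> Aset a1" for a
    using Aset_ge[OF that] a1 by auto
  have b_pos: "b > 0" if "b \<in> Bset b1" for b
    using that b1 by (auto simp: Bset_def)
  note S' = S[unfolded SMPS_with_def std_strategies_def]
  have retailer: "(\<forall>q\<ge>0. ContInt k (\<lambda>a b. b powr (1/k) / (a - 1) * fR (Suc t) a) a b q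
          \<and> PiR p k w q a b + Cont k (\<lambda>a b. b powr (1/k) / (a - 1) * fR (Suc t) a) a b q
            \<le> b powr (1/k) / (a - 1) * fRh t a w)
      \<and> b powr (1/k) / (a - 1) * fRh t a w = PiR p k w (b powr (1/k) * zS t a w) a b
          + Cont k (\<lambda>a b. b powr (1/k) / (a - 1) * fR (Suc t) a) a b (b powr (1/k) * zS t a w)"
    if t: "t \<in> {1..T}" and a: "a \<in> Aset a1" and b: "b \<in> Bset b1" and "w \<in> W" for t a b w
  proof (rule retailer_condition_scaled[OF k b_pos[OF b] a_bounds[OF a]])
    show "zS t a w \<ge> 0" "\<forall>z\<ge>0. PiR_std p k w z a + Eop k (fR (Suc t)) z a \<le> fRh t a w"
      "fRh t a w = PiR_std p k w (zS t a w) a + Eop k (fR (Suc t)) (zS t a w) a"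
      using S' that by blast+
  qed
  have manufacturer: "(\<forall>w\<in>W. ContInt k (\<lambda>a b. b powr (1/k) / (a - 1) * fM (Suc t) a) a b (b powr (1/k) * zS t a w)
          \<and> PiM c w (b powr (1/k) * zS t a w)
              + Cont k (\<lambda>a b. b powr (1/k) / (a - 1) * fM (Suc t) a) a b (b powr (1/k) * zS t a w)
            \<le> b powr (1/k) / (a - 1) * fM t a)
      \<and> b powr (1/k) / (a - 1) * fM t a = PiM c (wS t a) (b powr (1/k) * zS t a (wS t a))
          + Cont k (\<lambda>a b. b powr (1/k) / (a - 1) * fM (Suc t) a) a b (b powr (1/k) * zS t a (wS t a))"
    if t: "t \<in> {1..T}" and a: "a \<in> Aset a1" and b: "b \<in> Bset b1" for t a b
  proof (rule manufacturer_condition_scaled[OF k b_pos[OF b] a_bounds[OF a]])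
    show "wS t a \<in> W" "\<forall>w\<in>W. zS t a w \<ge> 0"
      "\<forall>w\<in>W. PiM_std c w (zS t a w) a + Eop k (fM (Suc t)) (zS t a w) a \<le> fM t a"
      "fM t a = PiM_std c (wS t a) (zS t a (wS t a)) a + Eop k (fM (Suc t)) (zS t a (wS t a)) a"
      using S' that by blast+
  qed
  have strategies: "markov_strategies a1 b1 W T (\<lambda>t a b. wS t a) (\<lambda>t a b w. b powr (1/k) * zS t a w)"
    using S by (simp add: SMPS_with_def std_strategies_imp_markov_strategies)
  show ?thesis
    unfolding MPE_with_def
    by (intro conjI) (use strategies retailer manufacturer S' in \<open>blast | simp\<close>)+
qed

section \<open>Existence of a standardized solution\<close>

lemma Eop_abs_le:
  assumes "k > 0" "a > 1" "a > 1/k"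
  shows "\<bar>Eop k f z a\<bar> \<le> (a - 1) / (a - 1/k) * \<bar>f (a + 1)\<bar> + \<bar>f a\<bar>"
proof -
  define G where "G = predG k (a - 1/k) 1 z"
  define C where "C = (a - 1) / (a - 1/k)"
  have G: "0 \<le> G" "G \<le> 1"
    using predG_nonneg[of 1 "a - 1/k"] predG_le_1[of 1] assms by (auto simp: G_def)
  have "C \<ge> 0"
    using assms by (simp add: C_def)
  have "G * \<bar>f (a + 1)\<bar> \<le> \<bar>f (a + 1)\<bar>"
    using G by (simp add: mult_left_le_one_le)
  then have "\<bar>C * G * f (a + 1)\<bar> \<le> C * \<bar>f (a + 1)\<bar>"
    using G \<open>C \<ge> 0\<close> by (simp add: abs_mult mult.assoc mult_left_mono)
  moreover have "\<bar>(1 - G) * f a\<bar> \<le> \<bar>f a\<bar>"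
    using G by (simp add: abs_mult mult_left_le_one_le)
  ultimately show ?thesis
    unfolding Eop_def G_def[symmetric] C_def[symmetric] by linarith
qed

lemma retailer_objective_at_0:
  assumes "k > 0" "a > 0"
  shows "PiR_std p k w 0 a + Eop k f 0 a = f a"
  using assms by (simp add: PiR_std_def Eop_def Ex_min_0 predG_nonpos)

lemma Ex_min_sublinear:
  assumes "k > 0" "a > 0" "\<epsilon> > 0"
  obtains z0 where "z0 \<ge> 0" "\<And>z. z \<ge> 0 \<Longrightarrow> Ex k a 1 (\<lambda>d. min d z) \<le> z0 + \<epsilon> * z"
proof -
  from predG_at_top[OF assms(1) zero_less_one assms(2)] assms(3)
  have "\<forall>\<^sub>F x in at_top. 1 - predG k a 1 x < \<epsilon>"
    by (auto simp: tendsto_iff dist_real_def elim!: eventually_mono)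
  then obtain N where N: "\<And>x. x \<ge> N \<Longrightarrow> 1 - predG k a 1 x < \<epsilon>"
    by (auto simp: eventually_at_top_linorder)
  show ?thesis
  proof
    fix z :: real assume "z \<ge> 0"
    have "Ex k a 1 (\<lambda>d. min d z) \<le> max N 0 + z * (1 - predG k a 1 (max N 0))"
      using assms \<open>z \<ge> 0\<close> by (intro Ex_min_le) auto
    also have "\<dots> \<le> max N 0 + \<epsilon> * z"
      using mult_right_mono[OF less_imp_le[OF N[of "max N 0"]] \<open>z \<ge> 0\<close>] by (simp add: mult.commute)
    finally show "Ex k a 1 (\<lambda>d. min d z) \<le> max N 0 + \<epsilon> * z" .
  qed simp
qed

lemma retailer_objective_coercive:
  assumes "k > 0" "a > 1" "a > 1/k" "p > 0" "wlo > 0"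
  obtains Zm where "Zm \<ge> 0"
    "\<And>w z. w \<ge> wlo \<Longrightarrow> z \<ge> Zm \<Longrightarrow> PiR_std p k w z a + Eop k f z a \<le> PiR_std p k w 0 a + Eop k f 0 a"
proof -
  have a: "a > 0" "a - 1 > 0"
    using assms by auto
  obtain z0 where z0: "z0 \<ge> 0" and E: "\<And>z. z \<ge> 0 \<Longrightarrow> Ex k a 1 (\<lambda>d. min d z) \<le> z0 + wlo / (2 * p) * z"
    using Ex_min_sublinear[OF assms(1) a(1), of "wlo / (2 * p)"] assms by auto
  define Bd where "Bd = (a - 1) / (a - 1/k) * \<bar>f (a + 1)\<bar> + \<bar>f a\<bar>"
  have Bd: "\<bar>Eop k f z a\<bar> \<le> Bd" for z
    using Eop_abs_le[OF assms(1-3)] by (simp add: Bd_def)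
  define Zm where "Zm = 2 * (p * z0 + 2 * Bd / (a - 1)) / wlo"
  have "\<bar>f a\<bar> \<le> Bd"
    using a assms by (simp add: Bd_def)
  show ?thesis
  proof
    show "Zm \<ge> 0"
      using \<open>\<bar>f a\<bar> \<le> Bd\<close> a z0 assms by (simp add: Zm_def)
    fix w z assume w: "w \<ge> wlo" and z: "z \<ge> Zm"
    with \<open>Zm \<ge> 0\<close> have "z \<ge> 0"
      by simp
    have "p * Ex k a 1 (\<lambda>d. min d z) - w * z \<le> p * z0 - wlo / 2 * z"
      using mult_left_mono[OF E[OF \<open>z \<ge> 0\<close>], of p] mult_right_mono[OF w \<open>z \<ge> 0\<close>] assms
      by (simp add: algebra_simps)
    also have "\<dots> \<le> - 2 * Bd / (a - 1)"
      using z assms a by (simp add: Zm_def field_simps)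
    finally have "PiR_std p k w z a \<le> - 2 * Bd"
      using a unfolding PiR_std_def by (simp add: mult_left_mono field_simps)
    then show "PiR_std p k w z a + Eop k f z a \<le> PiR_std p k w 0 a + Eop k f 0 a"
      using Bd[of z] \<open>\<bar>f a\<bar> \<le> Bd\<close> retailer_objective_at_0[OF assms(1) a(1), of p w f]
      by (simp add: abs_le_iff)
  qed
qed

lemma continuous_on_retailer_objective:
  assumes "k > 0" "a > 0"
  shows "continuous_on UNIV (\<lambda>x. PiR_std p k (fst x) (snd x) a + Eop k f (snd x) a)"
proof -
  have "continuous_on UNIV (\<lambda>z. Ex k a 1 (\<lambda>d. min d z))"
    using lipschitz_Ex_min[OF assms(1) zero_less_one assms(2)] by (rule lipschitz_on_continuous_on)
  then have "continuous_on UNIV (\<lambda>x::real \<times> real. Ex k a 1 (\<lambda>d. min d (snd x)))"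
    by (rule continuous_on_compose2[OF _ continuous_on_snd]) auto
  moreover have "continuous_on UNIV (\<lambda>x::real \<times> real. predG k (a - 1/k) 1 (snd x))"
    by (rule continuous_on_compose2[OF continuous_on_predG[OF assms(1) zero_less_one] continuous_on_snd])
      auto
  ultimately show ?thesis
    unfolding PiR_std_def Eop_def by (intro continuous_intros)
qed

lemma continuous_on_manufacturer_objective:
  assumes "k > 0"
  shows "continuous_on UNIV (\<lambda>x. PiM_std c (fst x) (snd x) a + Eop k f (snd x) a)"
proof -
  have "continuous_on UNIV (\<lambda>x::real \<times> real. predG k (a - 1/k) 1 (snd x))"
    by (rule continuous_on_compose2[OF continuous_on_predG[OF assms(1) zero_less_one] continuous_on_snd])
      auto
  then show ?thesis
    unfolding PiM_std_def Eop_def by (intro continuous_intros)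
qed

lemma leader_follower_optimum:
  fixes u v :: "'a::topological_space \<Rightarrow> 'b::topological_space \<Rightarrow> real"
  assumes "compact W" "W \<noteq> {}" "compact Z" "Z \<noteq> {}"
    and u: "continuous_on UNIV (\<lambda>x. u (fst x) (snd x))"
    and v: "continuous_on UNIV (\<lambda>x. v (fst x) (snd x))"
  obtains w0 zsel where "w0 \<in> W"
    "\<And>w. w \<in> W \<Longrightarrow> zsel w \<in> Z \<and> (\<forall>z\<in>Z. u w z \<le> u w (zsel w))"
    "\<And>w. w \<in> W \<Longrightarrow> v w (zsel w) \<le> v w0 (zsel w0)"
proof -
  have u_snd: "continuous_on UNIV (u w)" for w
    using continuous_on_compose2[OF u, of UNIV "\<lambda>z. (w, z)"] by (simp add: continuous_on_Pair)
  have u_fst: "continuous_on UNIV (\<lambda>x. u (fst x) z)" for z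
    using continuous_on_compose2[OF u, of UNIV "\<lambda>x. (fst x, z)"] by (simp add: continuous_intros)
  have "\<exists>z\<in>Z. \<forall>z'\<in>Z. u w z' \<le> u w z" for w
    using assms(3,4) continuous_on_subset[OF u_snd] by (intro continuous_attains_sup) auto
  then obtain br where br: "\<And>w. br w \<in> Z \<and> (\<forall>z\<in>Z. u w z \<le> u w (br w))"
    by metis
  \<comment> \<open>the graph of the follower's best-response correspondence\<close>
  define K where "K = (W \<times> Z) \<inter> (\<Inter>z\<in>Z. {x. u (fst x) z \<le> u (fst x) (snd x)})"
  have "compact K"
    unfolding K_def using assms(1,3) u u_fst
    by (intro compact_Int_closed compact_Times closed_INT ballI closed_Collect_le) auto
  moreover obtain w where "w \<in> W"
    using assms(2) by blast
  then have "(w, br w) \<in> K"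
    using br by (auto simp: K_def)
  ultimately obtain x0 where "x0 \<in> K" and x0: "\<And>x. x \<in> K \<Longrightarrow> v (fst x) (snd x) \<le> v (fst x0) (snd x0)"
    using continuous_attains_sup[of K "\<lambda>x. v (fst x) (snd x)"] continuous_on_subset[OF v] by blast
  define zsel where "zsel = br(fst x0 := snd x0)"
  have K: "(w, zsel w) \<in> K" if "w \<in> W" for w
    using that br \<open>x0 \<in> K\<close> by (cases "w = fst x0") (auto simp: zsel_def K_def)
  show ?thesis
  proof
    show "fst x0 \<in> W"
      using \<open>x0 \<in> K\<close> by (auto simp: K_def)
    show "zsel w \<in> Z \<and> (\<forall>z\<in>Z. u w z \<le> u w (zsel w))" if "w \<in> W" for w
      using K[OF that] by (auto simp: K_def)
    show "v w (zsel w) \<le> v (fst x0) (zsel (fst x0))" if "w \<in> W" for w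
      using x0[OF K[OF that]] by (simp add: zsel_def)
  qed
qed

lemma maximizers_antimono:
  fixes F zsel :: "real \<Rightarrow> real"
  assumes "C > 0"
    and opt: "\<And>w w'. w \<in> W \<Longrightarrow> w' \<in> W \<Longrightarrow> F (zsel w') - C * w * zsel w' \<le> F (zsel w) - C * w * zsel w"
  shows "antimono_on W zsel"
proof (rule monotone_onI)
  fix w1 w2 assume w: "w1 \<in> W" "w2 \<in> W" "w1 \<le> w2"
  have "C * ((w2 - w1) * (zsel w2 - zsel w1)) \<le> 0"
    using opt[OF w(1,2)] opt[OF w(2,1)] by (simp add: algebra_simps)
  then have "(w2 - w1) * (zsel w2 - zsel w1) \<le> 0"
    using assms(1) by (simp add: mult_le_0_iff)
  then show "zsel w2 \<le> zsel w1"
    using w(3) by (cases "w1 = w2") (auto simp: mult_le_0_iff)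
qed

lemma retailer_best_responses_antimono:
  assumes "a > 1"
    and opt: "\<And>w z. w \<in> W \<Longrightarrow> z \<ge> 0 \<Longrightarrow>
      PiR_std p k w z a + Eop k fr z a \<le> PiR_std p k w (zsel w) a + Eop k fr (zsel w) a"
    and nonneg: "\<And>w. w \<in> W \<Longrightarrow> zsel w \<ge> 0"
  shows "antimono_on W zsel"
proof (rule maximizers_antimono[where C="a - 1"
      and F="\<lambda>z. (a - 1) * p * Ex k a 1 (\<lambda>d. min d z) + Eop k fr z a"])
  fix w w' assume "w \<in> W" "w' \<in> W"
  from opt[OF this(1) nonneg[OF this(2)]]
  show "(a - 1) * p * Ex k a 1 (\<lambda>d. min d (zsel w')) + Eop k fr (zsel w') a - (a - 1) * w * zsel w'
      \<le> (a - 1) * p * Ex k a 1 (\<lambda>d. min d (zsel w)) + Eop k fr (zsel w) a - (a - 1) * w * zsel w"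
    by (simp add: PiR_std_def algebra_simps)
qed (use assms in simp)

lemma borel_measurable_antimono_on:
  fixes f :: "real \<Rightarrow> real"
  assumes "antimono_on A f"
  shows "f \<in> borel_measurable (restrict_space borel A)"
proof -
  have "mono_on A (\<lambda>x. - f x)"
    using assms by (auto simp: monotone_on_def)
  then have "(\<lambda>x. - (- f x)) \<in> borel_measurable (restrict_space borel A)"
    by (intro borel_measurable_uminus borel_measurable_mono_on_fnc)
  then show ?thesis
    by simp
qed

definition stage_solution ::
  "real \<Rightarrow> real \<Rightarrow> real \<Rightarrow> real set \<Rightarrow> (real \<Rightarrow> real) \<Rightarrow> (real \<Rightarrow> real) \<Rightarrow> real
     \<Rightarrow> real \<Rightarrow> (real \<Rightarrow> real) \<Rightarrow> bool" where
  "stage_solution p c k W fr fm a w0 zsel \<longleftrightarrow> w0 \<in> W \<and>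
     (\<forall>w\<in>W. zsel w \<ge> 0 \<and>
        (\<forall>z\<ge>0. PiR_std p k w z a + Eop k fr z a \<le> PiR_std p k w (zsel w) a + Eop k fr (zsel w) a)) \<and>
     (\<forall>w\<in>W. PiM_std c w (zsel w) a + Eop k fm (zsel w) a
        \<le> PiM_std c w0 (zsel w0) a + Eop k fm (zsel w0) a) \<and>
     zsel \<in> borel_measurable (restrict_space borel W)"

lemma stage_solution_exists:
  assumes "k > 0" "a > 1" "a > 1/k" "p > 0" "0 < wlo" "wlo \<le> whi"
  shows "\<exists>w0 zsel. stage_solution p c k {wlo..whi} fr fm a w0 zsel"
proof -
  define R where "R w z = PiR_std p k w z a + Eop k fr z a" for w z
  obtain Zm where "Zm \<ge> 0" and coercive: "\<And>w z. w \<ge> wlo \<Longrightarrow> z \<ge> Zm \<Longrightarrow> R w z \<le> R w 0"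
    using retailer_objective_coercive[OF assms(1-5), of fr] unfolding R_def by blast
  obtain w0 zsel where w0: "w0 \<in> {wlo..whi}"
    and best_response: "\<And>w. w \<in> {wlo..whi} \<Longrightarrow> zsel w \<in> {0..Zm} \<and> (\<forall>z\<in>{0..Zm}. R w z \<le> R w (zsel w))"
    and leader: "\<And>w. w \<in> {wlo..whi} \<Longrightarrow> PiM_std c w (zsel w) a + Eop k fm (zsel w) a
        \<le> PiM_std c w0 (zsel w0) a + Eop k fm (zsel w0) a"
  proof (rule leader_follower_optimum)
    show "{wlo..whi} \<noteq> {}" "{0..Zm} \<noteq> {}"
      using assms \<open>Zm \<ge> 0\<close> by auto
    show "continuous_on UNIV (\<lambda>x. R (fst x) (snd x))"
      unfolding R_def using assms by (intro continuous_on_retailer_objective) auto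
    show "continuous_on UNIV (\<lambda>x. PiM_std c (fst x) (snd x) a + Eop k fm (snd x) a)"
      using assms by (intro continuous_on_manufacturer_objective)
  qed auto
  have opt: "R w z \<le> R w (zsel w)" if "w \<in> {wlo..whi}" "z \<ge> 0" for w z
  proof (cases "z \<le> Zm")
    case False
    then have "R w z \<le> R w 0"
      using coercive that by auto
    also have "\<dots> \<le> R w (zsel w)"
      using best_response[OF that(1)] \<open>Zm \<ge> 0\<close> by auto
    finally show ?thesis .
  qed (use best_response that in auto)
  have "antimono_on {wlo..whi} zsel"
    using assms(2) opt best_response unfolding R_def by (intro retailer_best_responses_antimono) auto
  then have "zsel \<in> borel_measurable (restrict_space borel {wlo..whi})"
    by (rule borel_measurable_antimono_on)
  moreover have "\<forall>w\<in>{wlo..whi}. zsel w \<ge> 0 \<and> (\<forall>z\<ge>0. R w z \<le> R w (zsel w))"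
    using best_response opt by simp
  ultimately show ?thesis
    unfolding stage_solution_def R_def using w0 leader by blast
qed

lemma SMPS_exists:
  assumes k: "k > 0" and a1: "a1 > max 1 (1 / k)" and "p > 0" "0 < wlo" "wlo \<le> whi"
  shows "\<exists>wS zS. is_SMPS p c k a1 {wlo..whi} T wS zS"
proof -
  let ?W = "{wlo..whi}"
  define R where "R fr a w z = PiR_std p k w z a + Eop k fr z a" for fr a w z
  define M where "M fm a w z = PiM_std c w z a + Eop k fm z a" for fm a w z
  have "\<forall>fr fm a. \<exists>w0 zsel. a > 1 \<and> a > 1/k \<longrightarrow> stage_solution p c k ?W fr fm a w0 zsel"
    using stage_solution_exists[OF k _ _ assms(3-5)] by blast
  then obtain WS ZS where stage:
    "\<And>fr fm a. a > 1 \<Longrightarrow> a > 1/k \<Longrightarrow> stage_solution p c k ?W fr fm a (WS fr fm a) (ZS fr fm a)"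
    by metis
  define step where "step = (\<lambda>(fr, fm).
    (\<lambda>a. R fr a (WS fr fm a) (ZS fr fm a (WS fr fm a)),
     \<lambda>a. M fm a (WS fr fm a) (ZS fr fm a (WS fr fm a))))"
  define V where "V t = (step ^^ (T + 1 - t)) (\<lambda>_. 0, \<lambda>_. 0)" for t
  define fR where "fR t = fst (V t)" for t
  define fM where "fM t = snd (V t)" for t
  define wS where "wS t = WS (fR (Suc t)) (fM (Suc t))" for t
  define zS where "zS t = ZS (fR (Suc t)) (fM (Suc t))" for t
  define fRh where "fRh t a w = (if t \<le> T then R (fR (Suc t)) a w (zS t a w) else 0)" for t a w
  have V_Suc: "V t = step (V (Suc t))" if "t \<le> T" for t
    using that by (simp add: V_def Suc_diff_le)
  have fR: "fR t a = R (fR (Suc t)) a (wS t a) (zS t a (wS t a))"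
   and fM: "fM t a = M (fM (Suc t)) a (wS t a) (zS t a (wS t a))" if "t \<le> T" for t a
    using V_Suc[OF that] by (simp_all add: fR_def fM_def wS_def zS_def step_def case_prod_beta)
  have fT: "fR (Suc T) = (\<lambda>_. 0)" "fM (Suc T) = (\<lambda>_. 0)"
    by (simp_all add: fR_def fM_def V_def)
  have "stage_solution p c k ?W (fR (Suc t)) (fM (Suc t)) a (wS t a) (zS t a)" if "a \<in> Aset a1" for t a
    using stage Aset_ge[OF that] a1 by (simp add: wS_def zS_def)
  then have "SMPS_with p c k a1 ?W T wS zS fR fRh fM"
    unfolding SMPS_with_def std_strategies_def stage_solution_def
    by (auto simp: fR fM fT fRh_def R_def M_def)
  then show ?thesis
    unfolding is_SMPS_def by blast
qed

theorem theorem1: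
  fixes k p c b1 a1 wlo whi :: real and T :: nat
  assumes "k > 0" and "0 < c" and "c < p" and "T \<ge> 1" and "b1 > 0"
    and "a1 > max 1 (1 / k)"
    and "0 < wlo" and "wlo \<le> c" and "p \<le> whi"
  shows "(\<exists>wS zS. is_SMPS p c k a1 {wlo..whi} T wS zS)
       \<and> (\<exists>wS qS. is_MPE p c k a1 b1 {wlo..whi} T wS qS)
       \<and> (\<forall>wS zS fR fRh fM. SMPS_with p c k a1 {wlo..whi} T wS zS fR fRh fM \<longrightarrow>
            MPE_with p c k a1 b1 {wlo..whi} T
              (\<lambda>t a b. wS t a)
              (\<lambda>t a b w. b powr (1 / k) * zS t a w)
              (\<lambda>t a b. b powr (1 / k) / (a - 1) * fR t a)
              (\<lambda>t a b w. b powr (1 / k) / (a - 1) * fRh t a w)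
              (\<lambda>t a b. b powr (1 / k) / (a - 1) * fM t a))"
proof -
  have "p > 0" "wlo \<le> whi"
    using assms by linarith+
  then have SMPS: "\<exists>wS zS. is_SMPS p c k a1 {wlo..whi} T wS zS"
    using SMPS_exists assms by blast
  note MPE = SMPS_with_imp_MPE_with[OF assms(1,5,6), where W="{wlo..whi}" and T=T]
  from SMPS MPE have "\<exists>wS qS. is_MPE p c k a1 b1 {wlo..whi} T wS qS"
    unfolding is_SMPS_def is_MPE_def by blast
  with SMPS MPE show ?thesis
    by blast
qed

end
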